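(* Let $H=(v_1,\dots,v_6)$ be an embedded equilateral hexagon, considered up to translations and rotations, whose action-angle coordinates $(d_1,d_2,d_3,\theta_1,\theta_2,\theta_3)$ for the $T_{135}$ triangulation are defined. If $J(H)=(-1,1)$, then $\theta_i\in(0,\pi)$ for all $i\in\{1,2,3\}$, and $\theta_1+\theta_2<\pi$, $\theta_1+\theta_3<\pi$, $\theta_2+\theta_3<\pi$.
   Context: An equilateral hexagon is an ordered 6-tuple $H=(v_1,\dots,v_6)$ in $\mathbb{R}^3$ with $\|v_i-v_{i+1}\|=1$ (indices mod 6), edges $e_i=[v_i,v_{i+1}]$, oriented $v_1\to v_2\to\cdots\to v_6\to v_1$; embedded means non-adjacent edges are disjoint and adjacent ones meet only at their common endpoint. Standard position: $v_1=0$, $v_3$ on the positive $x$-axis, $v_5$ in the $xy$-plane with positive $y$-coordinate. Action-angle coordinates ($T_{135}$ triangulation), defined when $v_1,v_3,v_5$ are not collinear and $0<d_i<2$: $d_1=\|v_3-v_1\|$, $d_2=\|v_5-v_3\|$, $d_3=\|v_1-v_5\|$; with $m_1,m_2,m_3$ the midpoints of $[v_1,v_3],[v_3,v_5],[v_5,v_1]$, $u_1,u_2,u_3$ the unit vectors in the $xy$-plane perpendicular to these segments pointing toward the opposite vertex of triangle $v_1v_3v_5$ (toward $v_5,v_1,v_3$ respectively), and $e_z=(0,0,1)$, the angles $\theta_i\in[0,2\pi)$ are determined by $v_{2i}=m_i+\tfrac12\sqrt{4-d_i^2}(\cos\theta_i\,u_i+\sin\theta_i\,e_z)$ (regular planar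 hexagon: all $\theta_i=\pi$). Joint Chirality-Curl: $curl(H)=\operatorname{sign}\big((v_3-v_1)\times(v_5-v_1)\cdot(v_2-v_1)\big)$. For $i=2,4,6$, $T_i$ is the open triangular disk with vertices $v_{i-1},v_i,v_{i+1}$, oriented by the right-hand rule (normal $(v_i-v_{i-1})\times(v_{i+1}-v_i)$), and $\Delta_i$ is the algebraic intersection number of $T_i$ with the oriented polygon $H$. Then $J(H)=(\Delta_2\Delta_4\Delta_6,\ \Delta_2^2\Delta_4^2\Delta_6^2\,curl(H))$. *)

theory Defs
  imports "HOL-Analysis.Analysis"
begin

text \<open>A hexagon is given by a function v with vertices v 1, ..., v 6;
  hv v i is vertex v_i with the index read cyclically mod 6 (so hv v 0 = v 6, hv v 7 = v 1).\<close>

definition hv :: "(nat \<Rightarrow> real^3) \<Rightarrow> nat \<Rightarrow> real^3" where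
  "hv v i = v ((i + 5) mod 6 + 1)"

definition hedge :: "(nat \<Rightarrow> real^3) \<Rightarrow> nat \<Rightarrow> (real^3) set" where
  "hedge v i = closed_segment (hv v i) (hv v (i + 1))"

definition equilateral_hexagon :: "(nat \<Rightarrow> real^3) \<Rightarrow> bool" where
  "equilateral_hexagon v \<longleftrightarrow> (\<forall>i\<in>{1..6}. dist (hv v i) (hv v (i + 1)) = 1)"

definition embedded_hexagon :: "(nat \<Rightarrow> real^3) \<Rightarrow> bool" where
  "embedded_hexagon v \<longleftrightarrow>
     (\<forall>i\<in>{1..6}. hedge v i \<inter> hedge v (i mod 6 + 1) = {hv v (i + 1)}) \<and>
     (\<forall>i\<in>{1..6}. \<forall>j\<in>{1..6}. i \<noteq> j \<and> j \<noteq> i mod 6 + 1 \<and> i \<noteq> j mod 6 + 1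
        \<longrightarrow> hedge v i \<inter> hedge v j = {})"

definition curl :: "(nat \<Rightarrow> real^3) \<Rightarrow> real" where
  "curl v = sgn ((cross3 (hv v 3 - hv v 1) (hv v 5 - hv v 1)) \<bullet> (hv v 2 - hv v 1))"

definition open_triangle :: "real^3 \<Rightarrow> real^3 \<Rightarrow> real^3 \<Rightarrow> (real^3) set" where
  "open_triangle a b c =
     {x. \<exists>\<alpha> \<beta> \<gamma>. \<alpha> > 0 \<and> \<beta> > 0 \<and> \<gamma> > 0 \<and> \<alpha> + \<beta> + \<gamma> = 1 \<and>
          x = \<alpha> *\<^sub>R a + \<beta> *\<^sub>R b + \<gamma> *\<^sub>R c}"

definition tri_normal :: "(nat \<Rightarrow> real^3) \<Rightarrow> nat \<Rightarrow> real^3" where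
  "tri_normal v i = cross3 (hv v i - hv v (i - 1)) (hv v (i + 1) - hv v i)"

text \<open>Algebraic intersection number of the oriented open triangle T_i (i = 2,4,6) with
  the oriented polygon. Each edge e_j = [p,q] meeting the plane of T_i in a single point
  lying in the open disk contributes (sgn s(q) - sgn s(p))/2, where s is the signed
  height over the plane: a transverse crossing contributes +1 or -1 according to whether
  the edge direction agrees with the normal; the half-weights make the count correct
  (and well defined) when the polygon passes through the disk at a vertex.\<close>
definition Delta :: "(nat \<Rightarrow> real^3) \<Rightarrow> nat \<Rightarrow> real" where
  "Delta v i =
     (\<Sum>j=1..6.
        let n = tri_normal v i; a = hv v (i - 1);
            p = hv v j; q = hv v (j + 1);
            sp = n \<bullet> (p - a); sq = n \<bullet> (q - a);
            x = p + (sp / (sp - sq)) *\<^sub>R (q - p)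
        in if sp \<noteq> sq \<and> x \<in> open_triangle (hv v (i - 1)) (hv v i) (hv v (i + 1))
           then (sgn sq - sgn sp) / 2 else 0)"

definition J :: "(nat \<Rightarrow> real^3) \<Rightarrow> real \<times> real" where
  "J v = (Delta v 2 * Delta v 4 * Delta v 6,
          (Delta v 2)\<^sup>2 * (Delta v 4)\<^sup>2 * (Delta v 6)\<^sup>2 * curl v)"

text \<open>Action-angle coordinates for the T_135 triangulation, stated invariantly
  (they agree with the standard-position definition; e_z is the unit normal of the
  triangle v1 v3 v5 oriented by (v3-v1) x (v5-v1), which is (0,0,1) in standard position).\<close>
definition aa_d :: "(nat \<Rightarrow> real^3) \<Rightarrow> nat \<Rightarrow> real" where
  "aa_d v i = dist (hv v (2*i + 1)) (hv v (2*i - 1))"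

definition aa_mid :: "(nat \<Rightarrow> real^3) \<Rightarrow> nat \<Rightarrow> real^3" where
  "aa_mid v i = midpoint (hv v (2*i - 1)) (hv v (2*i + 1))"

definition aa_ez :: "(nat \<Rightarrow> real^3) \<Rightarrow> real^3" where
  "aa_ez v = sgn (cross3 (hv v 3 - hv v 1) (hv v 5 - hv v 1))"

text \<open>u_i: unit vector in the plane of v1 v3 v5, perpendicular to the segment, pointing
  toward the opposite vertex (normalized component of (opposite vertex - midpoint)
  orthogonal to the segment).\<close>
definition aa_u :: "(nat \<Rightarrow> real^3) \<Rightarrow> nat \<Rightarrow> real^3" where
  "aa_u v i =
     (let a = hv v (2*i - 1); b = hv v (2*i + 1); c = hv v (2*i + 3);
          w = (c - midpoint a b) - (((c - midpoint a b) \<bullet> (b - a)) / ((b - a) \<bullet> (b - a))) *\<^sub>R (b - a)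
      in sgn w)"

definition aa_defined :: "(nat \<Rightarrow> real^3) \<Rightarrow> bool" where
  "aa_defined v \<longleftrightarrow> \<not> collinear {hv v 1, hv v 3, hv v 5} \<and>
     (\<forall>i\<in>{1,2,3}. 0 < aa_d v i \<and> aa_d v i < 2)"

definition aa_theta :: "(nat \<Rightarrow> real^3) \<Rightarrow> nat \<Rightarrow> real" where
  "aa_theta v i = (THE \<theta>. 0 \<le> \<theta> \<and> \<theta> < 2 * pi \<and>
      hv v (2*i) = aa_mid v i + (sqrt (4 - (aa_d v i)\<^sup>2) / 2) *\<^sub>R
                     (cos \<theta> *\<^sub>R aa_u v i + sin \<theta> *\<^sub>R aa_ez v))"

end

theory Submission
  imports Defs
begin

(* Each even vertex v_2k is the apex of a flap over the side v_(2k-1) v_(2k+1) of the base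
   triangle v1 v3 v5, turned by theta_k out of the base plane; its height over that plane is
   proportional to sin theta_k.

   For a nondegenerate triangle T_i only the edges v_(i+2) v_(i+3) and v_(i+3) v_(i+4) can
   contribute to Delta_i.  J(H) = (-1, 1) gives curl = 1, so v2 lies above the base plane, and
   then so do v4 and v6, since otherwise some Delta_i would vanish.  Hence v_(i+3) lies above
   T_i, and Delta_i = 1 or -1 according as the edge v_(i+2) v_(i+3) enters T_i or the edge
   v_(i+3) v_(i+4) leaves it.  Consecutive triangles T_i, T_(i+2) share a vertex and cannot
   pierce each other, so Delta_2 Delta_4 Delta_6 = -1 forces Delta_i = -1 for all i.  Thus each
   apex lies below the neighbouring flaps, which in the frame of the base triangle reads
   sin (theta_k + theta_l) > 0. *)

section \<open>Triangles in space\<close>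

lemma cross3_independent:
  fixes E F :: "real^3"
  assumes "cross3 E F \<noteq> 0" and "s *\<^sub>R E + t *\<^sub>R F = 0"
  shows "s = 0" "t = 0"
proof -
  have "s *\<^sub>R cross3 E F = cross3 (s *\<^sub>R E + t *\<^sub>R F) F"
    by (simp add: cross_add_left cross_mult_left)
  moreover have "t *\<^sub>R cross3 E F = cross3 E (s *\<^sub>R E + t *\<^sub>R F)"
    by (simp add: cross_add_right cross_mult_right)
  ultimately show "s = 0" "t = 0"
    using assms by auto
qed

lemma cross3_cyclic: "cross3 (a - c) (b - c) = cross3 (b - a) (c - a)"
  by (simp add: cross3_simps)

lemma unit_sides_triangle_nondegenerate:
  fixes A B C :: "real^3"
  assumes "dist A B = 1" "dist B C = 1" "0 < dist A C" "dist A C < 2"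
  shows "cross3 (B - A) (C - A) \<noteq> 0"
proof
  assume "cross3 (B - A) (C - A) = 0"
  then have "collinear {B, A, C}"
    by (simp add: cross_eq_0 collinear_3)
  then show False
    using assms by (auto simp: collinear_between_cases between dist_commute)
qed

lemma open_triangle_iff:
  "x \<in> open_triangle A B C \<longleftrightarrow>
   (\<exists>\<beta> \<gamma>. \<beta> > 0 \<and> \<gamma> > 0 \<and> \<beta> + \<gamma> < 1 \<and> x = A + \<beta> *\<^sub>R (B - A) + \<gamma> *\<^sub>R (C - A))"
  (is "_ \<longleftrightarrow> ?rhs")
proof -
  have affine: "\<alpha> *\<^sub>R A + \<beta> *\<^sub>R B + \<gamma> *\<^sub>R C = A + \<beta> *\<^sub>R (B - A) + \<gamma> *\<^sub>R (C - A)"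
    if "\<alpha> + \<beta> + \<gamma> = 1" for \<alpha> \<beta> \<gamma> :: real
  proof -
    have "\<alpha> *\<^sub>R A + \<beta> *\<^sub>R B + \<gamma> *\<^sub>R C
        = (\<alpha> + \<beta> + \<gamma>) *\<^sub>R A + \<beta> *\<^sub>R (B - A) + \<gamma> *\<^sub>R (C - A)"
      by (simp add: algebra_simps)
    with that show ?thesis by simp
  qed
  show ?thesis
  proof
    assume "x \<in> open_triangle A B C"
    then show ?rhs
      unfolding open_triangle_def using affine by fastforce
  next
    assume ?rhs
    then obtain \<beta> \<gamma> where "\<beta> > 0" "\<gamma> > 0" "\<beta> + \<gamma> < 1" "x = A + \<beta> *\<^sub>R (B - A) + \<gamma> *\<^sub>R (C - A)"
      by blast
    then show "x \<in> open_triangle A B C"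
      unfolding open_triangle_def using affine[of "1 - \<beta> - \<gamma>" \<beta> \<gamma>]
      by (intro CollectI exI[of _ "1 - \<beta> - \<gamma>"] exI[of _ \<beta>] exI[of _ \<gamma>]) auto
  qed
qed

lemma open_triangle_rotate: "open_triangle A B C = open_triangle B C A"
proof -
  have "x \<in> open_triangle B C A" if "x \<in> open_triangle A B C" for A B C x
  proof -
    from that obtain \<alpha> \<beta> \<gamma> where "\<alpha> > 0" "\<beta> > 0" "\<gamma> > 0" "\<alpha> + \<beta> + \<gamma> = 1"
      "x = \<alpha> *\<^sub>R A + \<beta> *\<^sub>R B + \<gamma> *\<^sub>R C"
      unfolding open_triangle_def by blast
    then show ?thesis
      unfolding open_triangle_def
      by (intro CollectI exI[of _ \<beta>] exI[of _ \<gamma>] exI[of _ \<alpha>]) (auto simp: algebra_simps)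
  qed
  then show ?thesis by blast
qed

lemma vertices_notin_open_triangle:
  assumes "cross3 (B - A) (C - A) \<noteq> 0"
  shows "A \<notin> open_triangle A B C" "C \<notin> open_triangle A B C"
proof -
  have "\<beta> = 0" if "x \<in> {A, C}" "x = A + \<beta> *\<^sub>R (B - A) + \<gamma> *\<^sub>R (C - A)" for x \<beta> \<gamma>
  proof -
    from that have "\<beta> *\<^sub>R (B - A) + (if x = A then \<gamma> else \<gamma> - 1) *\<^sub>R (C - A) = 0"
      by (auto simp: algebra_simps)
    then show ?thesis using cross3_independent[OF assms] by blast
  qed
  then show "A \<notin> open_triangle A B C" "C \<notin> open_triangle A B C"
    unfolding open_triangle_iff by force+
qed

lemma inner_segment_diff:
  fixes N :: "'a::real_inner"
  shows "N \<bullet> ((1 - t) *\<^sub>R p + t *\<^sub>R q - a) = (1 - t) * (N \<bullet> (p - a)) + t * (N \<bullet> (q - a))"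
  by (simp add: inner_diff_right inner_add_right algebra_simps)

lemma closed_segment_diffE:
  assumes "x \<in> closed_segment p q"
  obtains t where "x - a = (1 - t) *\<^sub>R (p - a) + t *\<^sub>R (q - a)"
  using assms by (auto simp: closed_segment_def algebra_simps)

lemma open_triangle_in_halfspace:
  assumes "x \<in> open_triangle A B C" "N \<bullet> (B - A) \<ge> 0" "N \<bullet> (C - A) \<ge> 0"
    "N \<bullet> (B - A) > 0 \<or> N \<bullet> (C - A) > 0"
  shows "N \<bullet> (x - A) > 0"
proof -
  obtain \<beta> \<gamma> where "\<beta> > 0" "\<gamma> > 0" "x - A = \<beta> *\<^sub>R (B - A) + \<gamma> *\<^sub>R (C - A)"
    using assms(1) by (auto simp: open_triangle_iff)
  then show ?thesis
    using assms(2-4) by (auto simp: inner_add_right add_pos_nonneg add_nonneg_pos)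
qed

lemma closed_segment_in_halfspace:
  assumes "x \<in> closed_segment p q" "N \<bullet> (p - A) \<ge> 0" "N \<bullet> (q - A) \<ge> 0"
  shows "N \<bullet> (x - A) \<ge> 0"
  using assms by (auto simp: closed_segment_def inner_segment_diff)

lemma closed_segment_in_plane:
  assumes "x \<in> closed_segment p q" "N \<bullet> (p - A) = 0" "N \<bullet> (q - A) = 0"
  shows "N \<bullet> (x - A) = 0"
proof -
  have "N \<bullet> (x - A) \<ge> 0" "- N \<bullet> (x - A) \<ge> 0"
    using closed_segment_in_halfspace[OF assms(1), of N A]
      closed_segment_in_halfspace[OF assms(1), of "- N" A] assms(2,3)
    by simp_all
  then show ?thesis by simp
qed

lemma proportional_affine_coords:
  fixes E F :: "'a::real_vector"
  assumes "g1 \<noteq> 0 \<or> g2 \<noteq> 0" "P * g1 + Q * g2 = 0" "(1 - t) * g1 + t * g2 = 0"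
  shows "P *\<^sub>R E + Q *\<^sub>R F = (P + Q) *\<^sub>R ((1 - t) *\<^sub>R E + t *\<^sub>R F)"
proof -
  have "((1 - t) * Q - t * P) * g1 = 0" "((1 - t) * Q - t * P) * g2 = 0"
    using assms(2,3) by algebra+
  then have "(1 - t) * Q = t * P" using assms(1) by auto
  then have "P = (P + Q) * (1 - t)" "Q = (P + Q) * t" by (simp_all add: algebra_simps)
  then show ?thesis by (metis scaleR_scaleR scaleR_right_distrib)
qed

lemma shared_vertex_no_mutual_piercing:
  fixes a b c b' c' :: "real^3"
  assumes nondeg: "cross3 (b - a) (c - a) \<noteq> 0"
    and x: "x \<in> open_triangle a b c" "x \<in> closed_segment b' c'"
    and y: "y \<in> open_triangle a b' c'" "y \<in> closed_segment b c"
    and M: "M \<bullet> (b - a) = 0" "M \<bullet> (c - a) = 0" "M \<bullet> (b' - a) \<noteq> 0 \<or> M \<bullet> (c' - a) \<noteq> 0"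
    and M': "M' \<bullet> (b' - a) = 0" "M' \<bullet> (c' - a) = 0" "M' \<bullet> (b - a) \<noteq> 0 \<or> M' \<bullet> (c - a) \<noteq> 0"
  shows False
proof -
  obtain \<beta> \<gamma> where bg: "\<beta> > 0" "\<gamma> > 0" "\<beta> + \<gamma> < 1" "x - a = \<beta> *\<^sub>R (b - a) + \<gamma> *\<^sub>R (c - a)"
    using x(1) by (auto simp: open_triangle_iff)
  obtain \<beta>' \<gamma>' where bg': "\<beta>' > 0" "\<gamma>' > 0" "\<beta>' + \<gamma>' < 1" "y - a = \<beta>' *\<^sub>R (b' - a) + \<gamma>' *\<^sub>R (c' - a)"
    using y(1) by (auto simp: open_triangle_iff)
  obtain t where t: "x - a = (1 - t) *\<^sub>R (b' - a) + t *\<^sub>R (c' - a)"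
    using x(2) by (rule closed_segment_diffE)
  obtain m where m: "y - a = (1 - m) *\<^sub>R (b - a) + m *\<^sub>R (c - a)"
    using y(2) by (rule closed_segment_diffE)
  (* x and y lie on the line in which the two planes meet, each strictly closer to a than the other *)
  have "M \<bullet> (x - a) = 0" "M \<bullet> (y - a) = 0"
    using bg(4) m M(1,2) by (simp_all add: inner_add_right)
  then have yx: "y - a = (\<beta>' + \<gamma>') *\<^sub>R (x - a)"
    using proportional_affine_coords[OF M(3)] bg'(4) t by (simp add: inner_add_right)
  have "M' \<bullet> (y - a) = 0" "M' \<bullet> (x - a) = 0"
    using bg'(4) t M'(1,2) by (simp_all add: inner_add_right)
  then have xy: "x - a = (\<beta> + \<gamma>) *\<^sub>R (y - a)"
    using proportional_affine_coords[OF M'(3)] bg(4) m by (simp add: inner_add_right)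
  have "(1 - (\<beta> + \<gamma>) * (\<beta>' + \<gamma>')) *\<^sub>R (x - a) = 0"
    using xy yx by (simp add: algebra_simps)
  moreover have "(\<beta> + \<gamma>) * (\<beta>' + \<gamma>') < 1"
    using mult_strict_mono[of "\<beta> + \<gamma>" 1 "\<beta>' + \<gamma>'" 1] bg bg' by simp
  ultimately have "\<beta> *\<^sub>R (b - a) + \<gamma> *\<^sub>R (c - a) = 0"
    using bg(4) by simp
  then have "\<beta> = 0"
    by (rule cross3_independent[OF nondeg])
  then show False
    using bg(1) by simp
qed

lemma plane_through_vertex_separates:
  assumes "x \<in> open_triangle a b c" "x \<in> closed_segment p q"
    "M \<bullet> (p - a) = 0" "M \<bullet> (q - a) = 0" "M \<bullet> (c - a) > 0"
  shows "M \<bullet> (b - a) < 0"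
proof (rule ccontr)
  assume "\<not> M \<bullet> (b - a) < 0"
  then have "M \<bullet> (x - a) > 0"
    using open_triangle_in_halfspace[OF assms(1)] assms(5) by simp
  then show False
    using closed_segment_in_plane[OF assms(2-4)] by simp
qed

section \<open>Crossings of an edge with an oriented triangle\<close>

definition signed_height :: "real^3 \<Rightarrow> real^3 \<Rightarrow> real^3 \<Rightarrow> real^3 \<Rightarrow> real" where
  "signed_height A B C x = cross3 (B - A) (C - B) \<bullet> (x - A)"

definition edge_crossing :: "real^3 \<Rightarrow> real^3 \<Rightarrow> real^3 \<Rightarrow> real^3 \<Rightarrow> real^3 \<Rightarrow> real" where
  "edge_crossing A B C p q =
     (let sp = signed_height A B C p; sq = signed_height A B C q;
          x = p + (sp / (sp - sq)) *\<^sub>R (q - p)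
      in if sp \<noteq> sq \<and> x \<in> open_triangle A B C then (sgn sq - sgn sp) / 2 else 0)"

lemma Delta_eq_sum_edge_crossing:
  "Delta v i = (\<Sum>j=1..6. edge_crossing (hv v (i - 1)) (hv v i) (hv v (i + 1)) (hv v j) (hv v (j + 1)))"
  unfolding Delta_def edge_crossing_def signed_height_def tri_normal_def Let_def ..

lemma signed_height_vertices [simp]:
  "signed_height A B C A = 0" "signed_height A B C B = 0" "signed_height A B C C = 0"
proof -
  have "cross3 (B - A) (C - B) \<bullet> (B - A) = 0" "cross3 (B - A) (C - B) \<bullet> (C - B) = 0"
    by (simp_all add: dot_cross_self)
  then show "signed_height A B C A = 0" "signed_height A B C B = 0" "signed_height A B C C = 0"
    unfolding signed_height_def by (simp_all add: inner_diff_right)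
qed

lemma signed_height_triple: "signed_height A B C D = cross3 (C - A) (D - A) \<bullet> (B - A)"
  by (simp add: signed_height_def cross3_simps)

lemma signed_height_diff:
  "cross3 (B - A) (C - B) \<bullet> (x - y) = signed_height A B C x - signed_height A B C y"
  by (simp add: signed_height_def inner_diff_right)

lemma signed_height_parallel:
  assumes "N \<noteq> 0" "N \<bullet> (B - A) = 0" "N \<bullet> (C - B) = 0"
  obtains k where "\<And>x. signed_height A B C x = k * (N \<bullet> (x - A))"
proof
  define n where "n = cross3 (B - A) (C - B)"
  have "cross3 N n = 0"
    using assms(2,3) by (simp add: n_def Lagrange inner_commute)
  then have parallel: "(N \<bullet> N) *\<^sub>R n = (N \<bullet> n) *\<^sub>R N"
    using Lagrange[of N n N] cross_skew[of n N] by (simp add: inner_commute)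
  fix x
  have "(N \<bullet> N) * (n \<bullet> (x - A)) = (N \<bullet> n) * (N \<bullet> (x - A))"
    using arg_cong[OF parallel, of "\<lambda>y. y \<bullet> (x - A)"] by simp
  then show "signed_height A B C x = (N \<bullet> n) / (N \<bullet> N) * (N \<bullet> (x - A))"
    using assms(1) by (simp add: signed_height_def n_def[symmetric] field_simps)
qed

lemma edge_crossing_level:
  "signed_height A B C p = signed_height A B C q \<Longrightarrow> edge_crossing A B C p q = 0"
  unfolding edge_crossing_def Let_def by simp

lemma edge_crossing_incident:
  assumes "cross3 (B - A) (C - A) \<noteq> 0"
  shows "edge_crossing A B C A B = 0" "edge_crossing A B C B C = 0"
    "edge_crossing A B C C q = 0" "edge_crossing A B C q A = 0"
  using vertices_notin_open_triangle[OF assms]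
  by (auto simp: edge_crossing_def Let_def)

lemma edge_crossing_nonzeroD:
  assumes "edge_crossing A B C p q \<noteq> 0"
  shows "closed_segment p q \<inter> open_triangle A B C \<noteq> {}"
    and "edge_crossing A B C p q = (sgn (signed_height A B C q) - sgn (signed_height A B C p)) / 2"
    and "sgn (signed_height A B C q) \<noteq> sgn (signed_height A B C p)"
proof -
  define sp where "sp = signed_height A B C p"
  define sq where "sq = signed_height A B C q"
  define t where "t = sp / (sp - sq)"
  have hit: "sp \<noteq> sq" "p + t *\<^sub>R (q - p) \<in> open_triangle A B C"
    and val: "edge_crossing A B C p q = (sgn sq - sgn sp) / 2"
    using assms by (auto simp: edge_crossing_def Let_def sp_def sq_def t_def split: if_splits)
  show "edge_crossing A B C p q = (sgn (signed_height A B C q) - sgn (signed_height A B C p)) / 2"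
    using val by (simp add: sp_def sq_def)
  show "sgn (signed_height A B C q) \<noteq> sgn (signed_height A B C p)"
    using val assms by (auto simp: sp_def sq_def)
  then have "0 \<le> t \<and> t \<le> 1"
    using hit(1) unfolding t_def sp_def[symmetric] sq_def[symmetric]
    by (cases "sp < sq") (auto simp: sgn_if divide_simps split: if_splits)
  then have "p + t *\<^sub>R (q - p) \<in> closed_segment p q"
    by (auto simp: closed_segment_def algebra_simps intro!: exI[of _ t])
  then show "closed_segment p q \<inter> open_triangle A B C \<noteq> {}"
    using hit(2) by blast
qed

lemma edge_crossing_entering:
  assumes "signed_height A B C q > 0"
  shows "0 \<le> edge_crossing A B C p q" "edge_crossing A B C p q \<le> 1"
    and "edge_crossing A B C p q = 1 \<Longrightarrow>
      signed_height A B C p < 0 \<and> closed_segment p q \<inter> open_triangle A B C \<noteq> {}"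
  using edge_crossing_nonzeroD[of A B C p q] assms
  by (cases "edge_crossing A B C p q = 0"; auto simp: sgn_if split: if_splits)+

lemma edge_crossing_leaving:
  assumes "signed_height A B C p > 0"
  shows "-1 \<le> edge_crossing A B C p q" "edge_crossing A B C p q \<le> 0"
    and "edge_crossing A B C p q = -1 \<Longrightarrow>
      signed_height A B C q < 0 \<and> closed_segment p q \<inter> open_triangle A B C \<noteq> {}"
  using edge_crossing_nonzeroD[of A B C p q] assms
  by (cases "edge_crossing A B C p q = 0"; auto simp: sgn_if split: if_splits)+

lemma edge_crossing_separated:
  assumes "N \<bullet> (B - A) < 0" "N \<bullet> (C - A) = 0" "N \<bullet> (p - A) \<ge> 0" "N \<bullet> (q - A) \<ge> 0"
  shows "edge_crossing A B C p q = 0"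
proof (rule ccontr)
  assume "edge_crossing A B C p q \<noteq> 0"
  then obtain x where "x \<in> closed_segment p q" "x \<in> open_triangle A B C"
    using edge_crossing_nonzeroD(1) by blast
  then have "N \<bullet> (x - A) \<ge> 0" "- N \<bullet> (x - A) > 0"
    using closed_segment_in_halfspace[of x p q N A] open_triangle_in_halfspace[of x A B C "- N"] assms
    by auto
  then show False by simp
qed

lemma edge_crossings_cancel_touching:
  assumes "signed_height A B C q = 0" "sgn (signed_height A B C p) = sgn (signed_height A B C r)"
  shows "edge_crossing A B C p q + edge_crossing A B C q r = 0"
proof (cases "signed_height A B C p = 0")
  case True
  then show ?thesis using assms by (simp add: edge_crossing_level sgn_eq_0_iff)
next
  case False
  then have "signed_height A B C r \<noteq> 0" using assms(2) by (auto simp: sgn_eq_0_iff)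
  then show ?thesis using False assms by (auto simp: edge_crossing_def Let_def)
qed

section \<open>Flaps over the sides of a triangle\<close>

lemma angle_eq_if_sin_cos_eq:
  fixes x y :: real
  assumes "0 \<le> x" "x < 2 * pi" "0 \<le> y" "y < 2 * pi" "sin y = sin x" "cos y = cos x"
  shows "y = x"
proof -
  obtain n :: int where n: "y = x + 2 * pi * n"
    using assms(5,6) sin_cos_eq_iff by blast
  have "\<bar>y - x\<bar> < 2 * pi"
    using assms(1-4) by (auto simp: abs_less_iff)
  then have "2 * pi * \<bar>of_int n\<bar> < 2 * pi * 1"
    using n by (simp add: abs_mult)
  then have "\<bar>of_int n :: real\<bar> < 1"
    using pi_gt_zero by (simp only: mult_less_cancel_left_pos)
  then have "n = 0"
    by simp
  then show ?thesis
    using n by simp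
qed

lemma circle_angle_exists_unique:
  fixes u e X :: "'a::real_inner"
  assumes "u \<bullet> u = 1" "e \<bullet> e = 1" "u \<bullet> e = 0" "R > 0"
    and X: "X = (X \<bullet> u) *\<^sub>R u + (X \<bullet> e) *\<^sub>R e" and "X \<bullet> X = R\<^sup>2"
  shows "\<exists>!\<theta>. 0 \<le> \<theta> \<and> \<theta> < 2 * pi \<and> X = R *\<^sub>R (cos \<theta> *\<^sub>R u + sin \<theta> *\<^sub>R e)"
proof -
  have "X \<bullet> X = (X \<bullet> u)\<^sup>2 + (X \<bullet> e)\<^sup>2"
    using assms(1-3)
    by (subst (1 2) X) (simp add: inner_add_left inner_add_right inner_commute power2_eq_square)
  then have "(X \<bullet> u)\<^sup>2 + (X \<bullet> e)\<^sup>2 = R\<^sup>2"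
    using assms(6) by simp
  then have "(X \<bullet> u / R)\<^sup>2 + (X \<bullet> e / R)\<^sup>2 = 1"
    using assms(4) by (simp add: power_divide field_simps)
  then obtain \<theta> where \<theta>: "0 \<le> \<theta>" "\<theta> < 2 * pi" "X \<bullet> u / R = cos \<theta>" "X \<bullet> e / R = sin \<theta>"
    by (rule sincos_total_2pi)
  have coords: "X \<bullet> u = R * cos \<phi>" "X \<bullet> e = R * sin \<phi>"
    if "X = R *\<^sub>R (cos \<phi> *\<^sub>R u + sin \<phi> *\<^sub>R e)" for \<phi>
    using assms(1-3) by (simp_all add: that inner_add_left inner_commute[of e u])
  have "X \<bullet> u = R * cos \<theta>" "X \<bullet> e = R * sin \<theta>"
    using \<theta>(3,4) assms(4) by (simp_all add: field_simps)
  then have "X = R *\<^sub>R (cos \<theta> *\<^sub>R u + sin \<theta> *\<^sub>R e)"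
    by (subst X) (simp add: scaleR_add_right)
  moreover have "\<phi> = \<theta>" if "0 \<le> \<phi>" "\<phi> < 2 * pi" "X = R *\<^sub>R (cos \<phi> *\<^sub>R u + sin \<phi> *\<^sub>R e)" for \<phi>
  proof (rule angle_eq_if_sin_cos_eq)
    show "sin \<phi> = sin \<theta>" "cos \<phi> = cos \<theta>"
      using coords[OF that(3)] \<open>X \<bullet> u = R * cos \<theta>\<close> \<open>X \<bullet> e = R * sin \<theta>\<close> assms(4) by simp_all
  qed (use that \<theta> in auto)
  ultimately show ?thesis
    using \<theta>(1,2) by blast
qed

definition inward_normal :: "real^3 \<Rightarrow> real^3 \<Rightarrow> real^3 \<Rightarrow> real^3" where
  "inward_normal a b c =
     (let w = c - midpoint a b in sgn (w - ((w \<bullet> (b - a)) / ((b - a) \<bullet> (b - a))) *\<^sub>R (b - a)))"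

lemma inward_normal_eq:
  fixes a b c :: "real^3"
  defines "E \<equiv> b - a" and "F \<equiv> c - a"
  assumes nondeg: "cross3 E F \<noteq> 0"
  shows "inward_normal a b c = (norm E / norm (cross3 E F)) *\<^sub>R (F - (E \<bullet> F / (E \<bullet> E)) *\<^sub>R E)"
    and "norm (F - (E \<bullet> F / (E \<bullet> E)) *\<^sub>R E) = norm (cross3 E F) / norm E"
proof -
  define w where "w = F - (E \<bullet> F / (E \<bullet> E)) *\<^sub>R E"
  have "E \<noteq> 0"
    using nondeg by auto
  have cm: "c - midpoint a b = F - (1/2) *\<^sub>R E"
    by (simp add: E_def F_def midpoint_def vec_eq_iff algebra_simps)
  have co: "(c - midpoint a b) \<bullet> E / (E \<bullet> E) = E \<bullet> F / (E \<bullet> E) - 1/2"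
    using \<open>E \<noteq> 0\<close> by (simp add: cm inner_diff_left inner_diff_right inner_commute field_simps)
  have "(c - midpoint a b) - ((c - midpoint a b) \<bullet> E / (E \<bullet> E)) *\<^sub>R E
      = (F - (1/2) *\<^sub>R E) - (E \<bullet> F / (E \<bullet> E) - 1/2) *\<^sub>R E"
    unfolding co by (simp only: cm)
  also have "\<dots> = w"
    by (simp add: w_def algebra_simps)
  finally have "(c - midpoint a b) - ((c - midpoint a b) \<bullet> E / (E \<bullet> E)) *\<^sub>R E = w" .
  then have u: "inward_normal a b c = sgn w"
    by (simp add: inward_normal_def Let_def E_def[symmetric])
  have "E \<bullet> w = 0" "cross3 E w = cross3 E F"
    using \<open>E \<noteq> 0\<close> by (simp_all add: w_def inner_diff_right cross_mult_right Cross3.right_diff_distrib)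
  then have "(norm (cross3 E F))\<^sup>2 = (norm E * norm w)\<^sup>2"
    using norm_cross_dot[of E w] by simp
  then have "norm (cross3 E F) = norm E * norm w"
    using power2_eq_iff_nonneg[of "norm (cross3 E F)" "norm E * norm w"] by simp
  then have nw: "norm w = norm (cross3 E F) / norm E"
    using \<open>E \<noteq> 0\<close> by (simp add: field_simps)
  then show "norm (F - (E \<bullet> F / (E \<bullet> E)) *\<^sub>R E) = norm (cross3 E F) / norm E"
    by (simp add: w_def)
  show "inward_normal a b c = (norm E / norm (cross3 E F)) *\<^sub>R (F - (E \<bullet> F / (E \<bullet> E)) *\<^sub>R E)"
    using nw by (simp add: u sgn_div_norm w_def divide_inverse_commute)
qed

lemma inward_normal_frame:
  fixes a b c :: "real^3"
  defines "E \<equiv> b - a" and "F \<equiv> c - a" and "u \<equiv> inward_normal a b c"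
    and "e \<equiv> sgn (cross3 (b - a) (c - a))"
  assumes nondeg: "cross3 E F \<noteq> 0"
  shows "u \<bullet> u = 1" "e \<bullet> e = 1" "u \<bullet> e = 0" "u \<bullet> E = 0" "e \<bullet> E = 0" "e \<bullet> F = 0"
    and "cross3 E F = norm (cross3 E F) *\<^sub>R e"
    and "F = (norm (cross3 E F) / norm E) *\<^sub>R u + (E \<bullet> F / (E \<bullet> E)) *\<^sub>R E"
    and "cross3 u E = - norm E *\<^sub>R e" "cross3 e E = norm E *\<^sub>R u"
proof -
  define N where "N = cross3 E F"
  define w where "w = F - (E \<bullet> F / (E \<bullet> E)) *\<^sub>R E"
  have u: "u = (norm E / norm N) *\<^sub>R w" and nw: "norm w = norm N / norm E"
    using inward_normal_eq[OF nondeg[unfolded E_def F_def]]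
    unfolding u_def w_def N_def E_def[symmetric] F_def[symmetric] by simp_all
  have e: "e = (1 / norm N) *\<^sub>R N"
    by (simp add: e_def N_def E_def F_def sgn_div_norm divide_inverse_commute)
  have "E \<noteq> 0" "N \<noteq> 0"
    using nondeg by (auto simp: N_def)
  have wE: "w \<bullet> E = 0" "cross3 w E = - N"
    using \<open>E \<noteq> 0\<close> by (simp_all add: w_def N_def inner_diff_left inner_diff_right inner_commute
        Cross3.left_diff_distrib cross_mult_left cross_skew[of F E])
  show "u \<bullet> u = 1"
    using nw \<open>E \<noteq> 0\<close> \<open>N \<noteq> 0\<close>
    by (simp add: u power2_norm_eq_inner[symmetric] power_mult_distrib power_divide)
  show "e \<bullet> e = 1"
    using \<open>N \<noteq> 0\<close> by (simp add: e dot_square_norm power2_eq_square)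
  show "u \<bullet> e = 0"
    by (simp add: u e w_def N_def inner_diff_left dot_cross_self)
  show "u \<bullet> E = 0"
    using wE by (simp add: u)
  show "e \<bullet> E = 0" "e \<bullet> F = 0"
    by (simp_all add: e N_def dot_cross_self)
  show "cross3 E F = norm (cross3 E F) *\<^sub>R e"
    using \<open>N \<noteq> 0\<close> by (simp add: e N_def)
  show "F = (norm (cross3 E F) / norm E) *\<^sub>R u + (E \<bullet> F / (E \<bullet> E)) *\<^sub>R E"
    using \<open>E \<noteq> 0\<close> \<open>N \<noteq> 0\<close> by (simp add: u w_def N_def)
  show "cross3 u E = - norm E *\<^sub>R e"
    using wE \<open>N \<noteq> 0\<close> by (simp add: u e cross_mult_left)
  have "cross3 N E = (E \<bullet> E) *\<^sub>R F - (E \<bullet> F) *\<^sub>R E"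
    using Lagrange[of E E F] cross_skew[of N E] by (simp add: N_def)
  also have "\<dots> = (E \<bullet> E) *\<^sub>R w"
    using \<open>E \<noteq> 0\<close> by (simp add: w_def scaleR_diff_right)
  finally have "cross3 N E = (E \<bullet> E) *\<^sub>R w" .
  then show "cross3 e E = norm E *\<^sub>R u"
    using \<open>E \<noteq> 0\<close> by (simp add: u e cross_mult_left power2_norm_eq_inner[symmetric] power2_eq_square)
qed

lemma orthogonal_to_edge_decomposition:
  fixes a b c X :: "real^3"
  defines "u \<equiv> inward_normal a b c" and "e \<equiv> sgn (cross3 (b - a) (c - a))"
  assumes nondeg: "cross3 (b - a) (c - a) \<noteq> 0" and "X \<bullet> (b - a) = 0"
  shows "X = (X \<bullet> u) *\<^sub>R u + (X \<bullet> e) *\<^sub>R e"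
proof -
  note frame = inward_normal_frame[OF nondeg, folded u_def e_def]
  define Y where "Y = X - (X \<bullet> u) *\<^sub>R u - (X \<bullet> e) *\<^sub>R e"
  have "Y \<bullet> (b - a) = 0" "Y \<bullet> u = 0" "Y \<bullet> e = 0"
    using \<open>X \<bullet> (b - a) = 0\<close> frame(1-5)
    by (simp_all add: Y_def inner_diff_left inner_diff_right inner_commute)
  then have "Y \<bullet> (c - a) = 0"
    by (subst frame(8)) (simp add: inner_add_right)
  have "Y \<bullet> cross3 (b - a) (c - a) = 0"
    using \<open>Y \<bullet> e = 0\<close> by (subst frame(7)) simp
  have "cross3 Y (cross3 (b - a) (c - a)) = 0"
    using \<open>Y \<bullet> (b - a) = 0\<close> \<open>Y \<bullet> (c - a) = 0\<close> by (simp add: Lagrange)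
  then have "Y = 0"
    using norm_and_cross_eq_0[of Y] \<open>Y \<bullet> cross3 (b - a) (c - a) = 0\<close> nondeg by blast
  then show ?thesis
    by (simp add: Y_def algebra_simps)
qed

lemma apex_angle_exists_unique:
  fixes a b c p :: "real^3"
  assumes nondeg: "cross3 (b - a) (c - a) \<noteq> 0"
    and "dist p a = 1" "dist p b = 1" "dist b a < 2"
  shows "\<exists>!\<theta>. 0 \<le> \<theta> \<and> \<theta> < 2 * pi \<and>
    p = midpoint a b + (sqrt (4 - (dist b a)\<^sup>2) / 2) *\<^sub>R
      (cos \<theta> *\<^sub>R inward_normal a b c + sin \<theta> *\<^sub>R sgn (cross3 (b - a) (c - a)))"
proof -
  define E where "E = b - a"
  define R where "R = sqrt (4 - (dist b a)\<^sup>2) / 2"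
  define X where "X = p - midpoint a b"
  note frame = inward_normal_frame[OF nondeg]
  have "dist b a * dist b a < 2 * 2"
    using assms(4) by (intro mult_strict_mono) auto
  then have "R > 0" and R2: "R\<^sup>2 = 1 - (E \<bullet> E) / 4"
    by (simp_all add: R_def E_def power_divide dist_norm dot_square_norm power2_eq_square)
  have "(p - a) \<bullet> (p - a) = 1" "(p - a - E) \<bullet> (p - a - E) = 1"
    using assms(2,3) by (simp_all add: E_def dist_norm inner_commute dot_square_norm)
  then have pE: "(p - a) \<bullet> E = (E \<bullet> E) / 2"
    by (simp add: inner_diff_left inner_diff_right inner_commute)
  have X: "X = (p - a) - (1/2) *\<^sub>R E"
    by (simp add: X_def E_def midpoint_def vec_eq_iff algebra_simps)
  have "X \<bullet> (b - a) = 0"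
    using pE by (simp add: X E_def[symmetric] inner_diff_left)
  moreover have "X \<bullet> X = R\<^sup>2"
    using pE \<open>(p - a) \<bullet> (p - a) = 1\<close> R2
    by (simp add: X inner_diff_left inner_diff_right inner_commute)
  ultimately have "\<exists>!\<theta>. 0 \<le> \<theta> \<and> \<theta> < 2 * pi \<and>
      X = R *\<^sub>R (cos \<theta> *\<^sub>R inward_normal a b c + sin \<theta> *\<^sub>R sgn (cross3 (b - a) (c - a)))"
    using circle_angle_exists_unique[OF frame(1-3) \<open>R > 0\<close>]
      orthogonal_to_edge_decomposition[OF nondeg] by blast
  then show ?thesis
    by (simp add: X_def R_def diff_eq_eq add.commute)
qed

lemma apex_height:
  fixes a b c p :: "real^3"
  assumes nondeg: "cross3 (b - a) (c - a) \<noteq> 0"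
    and p: "p = midpoint a b + R *\<^sub>R (cos \<theta> *\<^sub>R inward_normal a b c + sin \<theta> *\<^sub>R sgn (cross3 (b - a) (c - a)))"
  shows "cross3 (b - a) (c - a) \<bullet> (p - a) = norm (cross3 (b - a) (c - a)) * R * sin \<theta>"
proof -
  note frame = inward_normal_frame[OF nondeg]
  have "p - a = (1/2) *\<^sub>R (b - a)
      + R *\<^sub>R (cos \<theta> *\<^sub>R inward_normal a b c + sin \<theta> *\<^sub>R sgn (cross3 (b - a) (c - a)))"
    by (simp add: p midpoint_def vec_eq_iff algebra_simps)
  then show ?thesis
    using frame(2,3,5) by (subst frame(7)) (simp add: inner_add_right inner_commute)
qed

lemma flap_signed_height:
  fixes a b c p :: "real^3"
  defines "u \<equiv> inward_normal a b c" and "e \<equiv> sgn (cross3 (b - a) (c - a))"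
  assumes nondeg: "cross3 (b - a) (c - a) \<noteq> 0"
    and p: "p = midpoint a b + R *\<^sub>R (cos \<theta> *\<^sub>R u + sin \<theta> *\<^sub>R e)"
  shows "signed_height a p b x = R * norm (b - a) * (sin \<theta> * (u \<bullet> (x - a)) - cos \<theta> * (e \<bullet> (x - a)))"
proof -
  note frame = inward_normal_frame[OF nondeg, folded u_def e_def]
  have "p - a = (1/2) *\<^sub>R (b - a) + (R * cos \<theta>) *\<^sub>R u + (R * sin \<theta>) *\<^sub>R e"
    by (simp add: p midpoint_def vec_eq_iff algebra_simps)
  then have "cross3 (p - a) (b - a) = (R * cos \<theta>) *\<^sub>R cross3 u (b - a) + (R * sin \<theta>) *\<^sub>R cross3 e (b - a)"
    by (simp add: cross_add_left cross_mult_left)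
  also have "\<dots> = (R * norm (b - a)) *\<^sub>R (sin \<theta> *\<^sub>R u - cos \<theta> *\<^sub>R e)"
    using frame(9,10) by (simp add: scaleR_diff_right ac_simps)
  finally have "cross3 (p - a) (b - p) = (R * norm (b - a)) *\<^sub>R (sin \<theta> *\<^sub>R u - cos \<theta> *\<^sub>R e)"
    by (simp add: cross3_simps)
  then show ?thesis
    by (simp add: signed_height_def inner_diff_left)
qed

lemma flap_below_iff:
  fixes a b c p :: "real^3"
  defines "u \<equiv> inward_normal a b c" and "e \<equiv> sgn (cross3 (b - a) (c - a))"
  assumes nondeg: "cross3 (b - a) (c - a) \<noteq> 0" and "R > 0"
    and p: "p = midpoint a b + R *\<^sub>R (cos \<theta> *\<^sub>R u + sin \<theta> *\<^sub>R e)"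
  shows "signed_height a p b x < 0 \<longleftrightarrow> sin \<theta> * (u \<bullet> (x - a)) < cos \<theta> * (e \<bullet> (x - a))"
proof -
  have "b - a \<noteq> 0"
    using nondeg by auto
  then have "R * norm (b - a) > 0"
    using \<open>R > 0\<close> by simp
  then show ?thesis
    using flap_signed_height[OF nondeg p[unfolded u_def e_def], of x] \<open>R > 0\<close>
    by (simp add: u_def e_def mult_less_0_iff)
qed

lemma inward_normals_inner:
  fixes a b c :: "real^3"
  defines "E \<equiv> b - a" and "F \<equiv> c - a"
  assumes nondeg: "cross3 E F \<noteq> 0"
  shows "inward_normal a b c \<bullet> inward_normal c a b = - (E \<bullet> F) / (norm E * norm F)"
proof -
  define N where "N = cross3 E F"
  have "E \<noteq> 0" "F \<noteq> 0" "N \<noteq> 0"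
    using nondeg by (auto simp: N_def)
  have u: "inward_normal a b c = (norm E / norm N) *\<^sub>R (F - (E \<bullet> F / (E \<bullet> E)) *\<^sub>R E)"
    using inward_normal_eq(1)[OF nondeg[unfolded E_def F_def]] by (simp add: N_def E_def F_def)
  have "cross3 (a - c) (b - c) = N"
    unfolding N_def E_def F_def by (rule cross3_cyclic)
  moreover have ac: "a - c = - F" "b - c = E - F"
    by (simp_all add: E_def F_def)
  ultimately have "inward_normal c a b
      = (norm F / norm N) *\<^sub>R ((E - F) - ((- F) \<bullet> (E - F) / (F \<bullet> F)) *\<^sub>R (- F))"
    using inward_normal_eq(1)[of a c b] \<open>N \<noteq> 0\<close> unfolding ac by simp
  also have "\<dots> = (norm F / norm N) *\<^sub>R (E - (E \<bullet> F / (F \<bullet> F)) *\<^sub>R F)"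
    using \<open>F \<noteq> 0\<close> by (simp add: inner_diff_right inner_commute algebra_simps diff_divide_distrib)
  finally have u': "inward_normal c a b = (norm F / norm N) *\<^sub>R (E - (E \<bullet> F / (F \<bullet> F)) *\<^sub>R F)" .
  have lag: "(norm N)\<^sup>2 = (E \<bullet> E) * (F \<bullet> F) - (E \<bullet> F)\<^sup>2"
    using norm_cross_dot[of E F] by (simp add: N_def power_mult_distrib dot_square_norm)
  have ww: "(F - (E \<bullet> F / (E \<bullet> E)) *\<^sub>R E) \<bullet> (E - (E \<bullet> F / (F \<bullet> F)) *\<^sub>R F)
      = - (E \<bullet> F) * (norm N)\<^sup>2 / ((E \<bullet> E) * (F \<bullet> F))"
    using \<open>E \<noteq> 0\<close> \<open>F \<noteq> 0\<close> unfolding lag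
    by (simp add: inner_diff_left inner_diff_right inner_commute field_simps power2_eq_square)
  have "inward_normal a b c \<bullet> inward_normal c a b
      = norm E / norm N * (norm F / norm N * (- (E \<bullet> F) * (norm N)\<^sup>2 / ((E \<bullet> E) * (F \<bullet> F))))"
    by (simp only: u u' inner_scaleR_left inner_scaleR_right ww mult.left_commute)
  also have "\<dots> = - (E \<bullet> F) / (norm E * norm F)"
    using \<open>E \<noteq> 0\<close> \<open>F \<noteq> 0\<close> \<open>N \<noteq> 0\<close> by (simp add: dot_square_norm field_simps power2_eq_square)
  finally show ?thesis .
qed

lemma abs_inner_less_if_cross3_nonzero:
  "cross3 x y \<noteq> 0 \<Longrightarrow> \<bar>x \<bullet> y\<bar> < norm x * norm y"
  using Cauchy_Schwarz_ineq2[of x y] norm_cauchy_schwarz_equal[of x y] cross_eq_0[of x y]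
  by linarith

lemma add_pos_of_twisted:
  fixes x y k :: real
  assumes "\<bar>k\<bar> < 1" "x * k + y > 0" "y * k + x > 0"
  shows "x + y > 0"
proof -
  have "(x + y) * (1 + k) > 0"
    using assms(2,3) by (simp add: algebra_simps)
  moreover have "1 + k > 0"
    using assms(1) by simp
  ultimately show ?thesis
    by (simp add: zero_less_mult_iff)
qed

lemma twist_pos_of_flap_below:
  fixes h k r s s' c c' :: real
  assumes "s * (h - r * c' * k) < c * (r * s')" "s > 0" "h > 0" "r > 0"
  shows "(s * c') * k + c * s' > 0"
proof -
  have "r * ((s * c') * k + c * s') > s * h"
    using assms(1) by (simp add: algebra_simps)
  moreover have "s * h > 0"
    using assms(2,3) by simp
  ultimately have "r * ((s * c') * k + c * s') > 0"
    by linarith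
  then show ?thesis
    using assms(4) by (simp add: zero_less_mult_iff)
qed

lemma sin_add_pos_if_flaps_below:
  fixes A B C P Q :: "real^3"
  defines "u \<equiv> inward_normal A B C" and "u' \<equiv> inward_normal C A B"
    and "e \<equiv> sgn (cross3 (B - A) (C - A))"
  assumes nondeg: "cross3 (B - A) (C - A) \<noteq> 0"
    and P: "P = midpoint A B + R *\<^sub>R (cos \<theta> *\<^sub>R u + sin \<theta> *\<^sub>R e)"
    and Q: "Q = midpoint C A + R' *\<^sub>R (cos \<phi> *\<^sub>R u' + sin \<phi> *\<^sub>R e)"
    and pos: "R > 0" "R' > 0" "sin \<theta> > 0" "sin \<phi> > 0"
    and below: "signed_height A P B Q < 0" "signed_height C Q A P < 0"
  shows "sin (\<theta> + \<phi>) > 0"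
proof -
  define E F N k where "E = B - A" and "F = C - A" and "N = cross3 E F"
    and "k = (E \<bullet> F) / (norm E * norm F)"
  have N': "cross3 (A - C) (B - C) = N"
    unfolding N_def E_def F_def by (rule cross3_cyclic)
  have "N \<noteq> 0" "E \<noteq> 0" "F \<noteq> 0"
    using nondeg by (auto simp: N_def E_def F_def)
  have nondeg': "cross3 (A - C) (B - C) \<noteq> 0" and e': "e = sgn (cross3 (A - C) (B - C))"
    using nondeg by (simp_all add: N' N_def E_def F_def e_def)
  note frame = inward_normal_frame[OF nondeg, folded u_def e_def E_def F_def N_def]
  note frame' = inward_normal_frame[OF nondeg', folded u'_def e', unfolded N']
  have CA: "A - C = - F" "B - C = E - F" "norm (A - C) = norm F"
    by (simp_all add: E_def F_def norm_minus_commute)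
  have uu': "u \<bullet> u' = - k"
    using inward_normals_inner[OF nondeg] by (simp add: u_def u'_def k_def E_def F_def)
  have uF: "u \<bullet> F = norm N / norm E"
    using frame(1,4) by (subst frame(8)) (simp add: inner_add_right)
  have u'F: "u' \<bullet> F = 0"
    using frame'(4) by (simp add: CA)
  have "u' \<bullet> (B - C) = norm N / norm F"
    using frame'(1,4) CA by (subst frame'(8)) (simp add: inner_add_right)
  then have u'E: "u' \<bullet> E = norm N / norm F"
    using u'F by (simp add: CA inner_diff_right)
  (* k is the cosine of the angle at A; each apex lying below the other flap yields one of the
     inequalities x k + y > 0 and y k + x > 0 for x = sin \<theta> cos \<phi> and y = cos \<theta> sin \<phi>. *)
  have "Q - A = (1/2) *\<^sub>R F + (R' * cos \<phi>) *\<^sub>R u' + (R' * sin \<phi>) *\<^sub>R e"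
    by (simp add: Q F_def midpoint_def vec_eq_iff algebra_simps)
  then have "u \<bullet> (Q - A) = norm N / (2 * norm E) - R' * cos \<phi> * k" "e \<bullet> (Q - A) = R' * sin \<phi>"
    using frame(2,3,6) frame'(3) uu' uF by (simp_all add: inner_add_right inner_commute)
  then have twist1: "(sin \<theta> * cos \<phi>) * k + cos \<theta> * sin \<phi> > 0"
    using flap_below_iff[OF nondeg pos(1) P[unfolded u_def e_def], of Q] below(1) pos
      \<open>N \<noteq> 0\<close> \<open>E \<noteq> 0\<close>
    by (intro twist_pos_of_flap_below[of _ "norm N / (2 * norm E)" R']) (simp_all add: u_def e_def)
  have "P - C = (1/2) *\<^sub>R E - F + (R * cos \<theta>) *\<^sub>R u + (R * sin \<theta>) *\<^sub>R e"
    by (simp add: P E_def F_def midpoint_def vec_eq_iff algebra_simps)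
  then have "u' \<bullet> (P - C) = norm N / (2 * norm F) - R * cos \<theta> * k" "e \<bullet> (P - C) = R * sin \<theta>"
    using frame(2,3,5,6) frame'(3) uu' u'E u'F
    by (simp_all add: inner_add_right inner_diff_right inner_commute)
  then have twist2: "(sin \<phi> * cos \<theta>) * k + cos \<phi> * sin \<theta> > 0"
    using flap_below_iff[OF nondeg' pos(2) Q[unfolded u'_def e'], of P] below(2) pos
      \<open>N \<noteq> 0\<close> \<open>F \<noteq> 0\<close>
    by (intro twist_pos_of_flap_below[of _ "norm N / (2 * norm F)" R]) (simp_all add: u'_def e')
  have "\<bar>E \<bullet> F\<bar> < norm E * norm F"
    using abs_inner_less_if_cross3_nonzero \<open>N \<noteq> 0\<close> by (simp add: N_def)
  then have "\<bar>k\<bar> < 1"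
    using \<open>E \<noteq> 0\<close> \<open>F \<noteq> 0\<close> by (simp add: k_def abs_divide)
  then show ?thesis
    using add_pos_of_twisted[of k "sin \<theta> * cos \<phi>" "cos \<theta> * sin \<phi>"] twist1 twist2
    by (simp add: sin_add ac_simps)
qed

lemma angle_in_0_pi_if_sin_pos:
  fixes x :: real
  assumes "0 \<le> x" "x < 2 * pi" "sin x > 0"
  shows "0 < x \<and> x < pi"
proof -
  have "x \<noteq> 0" "\<not> pi \<le> x"
    using assms sin_le_zero[of x] by auto
  then show ?thesis
    using assms(1) by auto
qed

lemma add_lt_pi_if_sin_add_pos:
  fixes x y :: real
  assumes "x < pi" "y < pi" "sin (x + y) > 0"
  shows "x + y < pi"
  using assms sin_le_zero[of "x + y"] by force

section \<open>Equilateral hexagons in action-angle coordinates\<close>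

lemma hv_next:
  assumes "(i, j) \<in> {(2, 4), (4, 6), (6, 2)}"
  shows "hv v (j - 1) = hv v (i + 1)" "hv v j = hv v (i + 2)" "hv v (j + 1) = hv v (i + 3)"
    "hv v (j + 3) = hv v (i - 1)" "hv v (j + 4) = hv v i"
  using assms by (auto simp: hv_def)

lemma sum_1_to_6:
  fixes f :: "nat \<Rightarrow> 'a::comm_monoid_add"
  shows "(\<Sum>j=1..6. f j) = f 1 + f 2 + f 3 + f 4 + f 5 + f 6"
  by (simp add: numeral_eq_Suc add.assoc)

lemma abs_factors_eq_1:
  fixes a b c :: real
  assumes "\<bar>a\<bar> \<le> 1" "\<bar>b\<bar> \<le> 1" "\<bar>c\<bar> \<le> 1" "a * b * c = -1"
  shows "\<bar>a\<bar> = 1" "\<bar>b\<bar> = 1" "\<bar>c\<bar> = 1"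
proof -
  have prod: "\<bar>a\<bar> * \<bar>b\<bar> * \<bar>c\<bar> = 1"
    using assms(4) by (metis abs_mult abs_neg_one)
  have "\<bar>b\<bar> * \<bar>c\<bar> \<le> 1" "\<bar>a\<bar> * \<bar>c\<bar> \<le> 1" "\<bar>a\<bar> * \<bar>b\<bar> \<le> 1"
    using assms(1-3) by (simp_all add: mult_le_one)
  then have "\<bar>a\<bar> * (\<bar>b\<bar> * \<bar>c\<bar>) \<le> \<bar>a\<bar>" "\<bar>b\<bar> * (\<bar>a\<bar> * \<bar>c\<bar>) \<le> \<bar>b\<bar>"
    "\<bar>c\<bar> * (\<bar>a\<bar> * \<bar>b\<bar>) \<le> \<bar>c\<bar>"
    by (simp_all add: mult_left_le)
  then show "\<bar>a\<bar> = 1" "\<bar>b\<bar> = 1" "\<bar>c\<bar> = 1"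
    using prod assms(1-3) by (simp_all add: ac_simps)
qed

locale T135_hexagon =
  fixes v :: "nat \<Rightarrow> real^3"
  assumes equilateral: "equilateral_hexagon v"
    and coordinates_defined: "aa_defined v"
begin

definition normal :: "real^3" where
  "normal = cross3 (hv v 3 - hv v 1) (hv v 5 - hv v 1)"

definition height :: "nat \<Rightarrow> real" where
  "height i = normal \<bullet> (hv v i - hv v 1)"

abbreviation tri_height :: "nat \<Rightarrow> real^3 \<Rightarrow> real" where
  "tri_height i \<equiv> signed_height (hv v (i - 1)) (hv v i) (hv v (i + 1))"

abbreviation tri_crossing :: "nat \<Rightarrow> real^3 \<Rightarrow> real^3 \<Rightarrow> real" where
  "tri_crossing i \<equiv> edge_crossing (hv v (i - 1)) (hv v i) (hv v (i + 1))"

lemma side_length: "i \<in> {1..6} \<Longrightarrow> dist (hv v i) (hv v (i + 1)) = 1"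
  using equilateral by (simp add: equilateral_hexagon_def)

lemma diagonal_length:
  assumes "i \<in> {2,4,6}"
  shows "0 < dist (hv v (i - 1)) (hv v (i + 1))" "dist (hv v (i - 1)) (hv v (i + 1)) < 2"
  using assms coordinates_defined by (auto simp: aa_defined_def aa_d_def dist_commute)

lemma triangle_nondegenerate:
  assumes "i \<in> {2,4,6}"
  shows "cross3 (hv v i - hv v (i - 1)) (hv v (i + 1) - hv v (i - 1)) \<noteq> 0"
proof (rule unit_sides_triangle_nondegenerate)
  have "i - 1 \<in> {1..6}" "i - 1 + 1 = i" "i \<in> {1..6}"
    using assms by auto
  then show "dist (hv v (i - 1)) (hv v i) = 1" "dist (hv v i) (hv v (i + 1)) = 1"
    using side_length by metis+
qed (use diagonal_length[OF assms] in auto)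

lemma Delta_eq_edge_crossings:
  assumes "i \<in> {2,4,6}"
  shows "Delta v i =
      tri_crossing i (hv v (i + 2)) (hv v (i + 3)) + tri_crossing i (hv v (i + 3)) (hv v (i + 4))"
  using assms edge_crossing_incident[OF triangle_nondegenerate[OF assms]]
  unfolding Delta_eq_sum_edge_crossing sum_1_to_6
  by (auto simp: hv_def)

lemma normal_nonzero: "normal \<noteq> 0"
proof
  assume "normal = 0"
  then have "collinear {hv v 3, hv v 1, hv v 5}"
    by (simp add: normal_def cross_eq_0 collinear_3)
  then show False
    using coordinates_defined by (simp add: aa_defined_def insert_commute)
qed

lemma normal_rotate:
  "i \<in> {2,4,6} \<Longrightarrow> cross3 (hv v (i + 1) - hv v (i - 1)) (hv v (i + 3) - hv v (i - 1)) = normal"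
  by (auto simp: normal_def hv_def cross3_simps)

lemma height_odd:
  assumes "odd j"
  shows "height j = 0"
proof -
  have "(j + 5) mod 6 = 0 \<or> (j + 5) mod 6 = 2 \<or> (j + 5) mod 6 = 4"
    using assms by presburger
  then have "hv v j \<in> {hv v 1, hv v 3, hv v 5}"
    by (auto simp: hv_def)
  moreover have "normal \<bullet> (hv v 3 - hv v 1) = 0" "normal \<bullet> (hv v 5 - hv v 1) = 0"
    by (simp_all add: normal_def dot_cross_self)
  ultimately show ?thesis
    by (auto simp: height_def)
qed

lemma height_from_triangle:
  assumes "i \<in> {2,4,6}"
  shows "normal \<bullet> (x - hv v (i - 1)) = normal \<bullet> (x - hv v 1)"
proof -
  have "height (i - 1) = 0"
    using assms by (auto intro: height_odd)
  then show ?thesis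
    by (simp add: height_def inner_diff_right)
qed

lemma tri_height_opposite:
  assumes "i \<in> {2,4,6}"
  shows "tri_height i (hv v (i + 3)) = height i"
  using normal_rotate[OF assms] height_from_triangle[OF assms]
  by (simp add: signed_height_triple height_def)

lemma Delta_eq_0_if_apex_above:
  assumes i: "i \<in> {2,4,6}" and "height i > 0" "height (i + 2) \<le> 0" "height (i + 4) \<le> 0"
  shows "Delta v i = 0"
proof -
  have "height (i + 1) = 0" "height (i + 3) = 0"
    using i by (auto intro: height_odd)
  then show ?thesis
    using edge_crossing_separated[where N = "- normal" and A = "hv v (i - 1)" and B = "hv v i"
        and C = "hv v (i + 1)"] assms
    by (simp add: Delta_eq_edge_crossings[OF i] height_from_triangle[OF i, simplified] height_def)
qed

lemma Delta_eq_0_if_apex_below: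
  assumes i: "i \<in> {2,4,6}" and "height i \<le> 0" "height (i + 2) > 0" "height (i + 4) > 0"
  shows "Delta v i = 0"
proof -
  have odd_heights: "height (i + 1) = 0" "height (i + 3) = 0"
    using i by (auto intro: height_odd)
  note from_triangle = height_from_triangle[OF i, simplified]
  show ?thesis
  proof (cases "height i = 0")
    case False
    then show ?thesis
      using edge_crossing_separated[where N = normal and A = "hv v (i - 1)" and B = "hv v i"
          and C = "hv v (i + 1)"] assms odd_heights
      by (simp add: Delta_eq_edge_crossings[OF i] from_triangle height_def)
  next
    case True
    (* T_i lies in the base plane, and the path v_(i+2) v_(i+3) v_(i+4) touches it at v_(i+3)
       from above, so the two half crossings cancel. *)
    then have "normal \<bullet> (hv v i - hv v (i - 1)) = 0"
      by (simp add: from_triangle height_def)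
    moreover have "normal \<bullet> (hv v (i + 1) - hv v i) = 0"
      using True odd_heights by (simp add: height_def inner_diff_right)
    ultimately obtain k where "\<And>x. tri_height i x = k * (normal \<bullet> (x - hv v (i - 1)))"
      using signed_height_parallel[OF normal_nonzero] by blast
    then have "tri_height i (hv v (i + 3)) = 0"
      "sgn (tri_height i (hv v (i + 2))) = sgn (tri_height i (hv v (i + 4)))"
      using assms odd_heights by (simp_all add: from_triangle height_def sgn_mult)
    then show ?thesis
      by (simp add: Delta_eq_edge_crossings[OF i] edge_crossings_cancel_touching)
  qed
qed

lemma heights_positive:
  assumes "height 2 > 0" and "Delta v 2 \<noteq> 0" "Delta v 4 \<noteq> 0" "Delta v 6 \<noteq> 0"
  shows "height 4 > 0" "height 6 > 0"
proof -
  have wrap: "height 8 = height 2" "height 10 = height 4"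
    by (simp_all add: height_def hv_def)
  show "height 4 > 0"
  proof (rule ccontr)
    assume "\<not> height 4 > 0"
    then show False
      using Delta_eq_0_if_apex_above[of 2] Delta_eq_0_if_apex_below[of 4] wrap assms
      by (cases "height 6 > 0") auto
  qed
  then show "height 6 > 0"
    using Delta_eq_0_if_apex_below[of 6] wrap assms by force
qed

definition radius :: "nat \<Rightarrow> real" where
  "radius k = sqrt (4 - (aa_d v k)\<^sup>2) / 2"

lemma radius_pos: "k \<in> {1,2,3} \<Longrightarrow> radius k > 0"
proof -
  assume k: "k \<in> {1,2,3}"
  then have "0 \<le> aa_d v k" "aa_d v k < 2"
    using coordinates_defined by (auto simp: aa_defined_def)
  then have "aa_d v k * aa_d v k < 2 * 2"
    by (intro mult_strict_mono) auto
  then show "radius k > 0"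
    by (simp add: radius_def power2_eq_square)
qed

lemma theta_char:
  assumes k: "k \<in> {1,2,3}"
  shows "0 \<le> aa_theta v k" "aa_theta v k < 2 * pi"
    and "hv v (2 * k) = midpoint (hv v (2 * k - 1)) (hv v (2 * k + 1)) + radius k *\<^sub>R
      (cos (aa_theta v k) *\<^sub>R inward_normal (hv v (2 * k - 1)) (hv v (2 * k + 1)) (hv v (2 * k + 3))
        + sin (aa_theta v k) *\<^sub>R sgn normal)"
proof -
  define P where "P \<theta> \<longleftrightarrow> 0 \<le> \<theta> \<and> \<theta> < 2 * pi \<and>
      hv v (2 * k) = midpoint (hv v (2 * k - 1)) (hv v (2 * k + 1)) + radius k *\<^sub>R
        (cos \<theta> *\<^sub>R inward_normal (hv v (2 * k - 1)) (hv v (2 * k + 1)) (hv v (2 * k + 3))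
          + sin \<theta> *\<^sub>R sgn normal)" for \<theta>
  have i: "2 * k \<in> {2,4,6}" "2 * k - 1 + 1 = 2 * k" "2 * k - 1 \<in> {1..6}" "2 * k \<in> {1..6}"
    using k by auto
  have nondeg: "cross3 (hv v (2 * k + 1) - hv v (2 * k - 1)) (hv v (2 * k + 3) - hv v (2 * k - 1)) = normal"
    using normal_rotate[OF i(1)] by simp
  have "dist (hv v (2 * k)) (hv v (2 * k - 1)) = 1" "dist (hv v (2 * k)) (hv v (2 * k + 1)) = 1"
    using side_length[OF i(3)] side_length[OF i(4)] i(2) by (simp_all add: dist_commute)
  moreover have "dist (hv v (2 * k + 1)) (hv v (2 * k - 1)) < 2"
    using diagonal_length(2)[OF i(1)] by (simp add: dist_commute)
  ultimately have "\<exists>!\<theta>. P \<theta>"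
    using apex_angle_exists_unique[where a = "hv v (2 * k - 1)" and b = "hv v (2 * k + 1)"
        and c = "hv v (2 * k + 3)" and p = "hv v (2 * k)"] nondeg normal_nonzero
    by (simp add: P_def radius_def aa_d_def)
  moreover have "aa_theta v k = (THE \<theta>. P \<theta>)"
    unfolding P_def aa_theta_def aa_mid_def aa_u_def aa_ez_def inward_normal_def radius_def normal_def
      Let_def ..
  ultimately have "P (aa_theta v k)"
    using theI' by simp
  then show "0 \<le> aa_theta v k" "aa_theta v k < 2 * pi"
    "hv v (2 * k) = midpoint (hv v (2 * k - 1)) (hv v (2 * k + 1)) + radius k *\<^sub>R
      (cos (aa_theta v k) *\<^sub>R inward_normal (hv v (2 * k - 1)) (hv v (2 * k + 1)) (hv v (2 * k + 3))
        + sin (aa_theta v k) *\<^sub>R sgn normal)"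
    unfolding P_def by auto
qed

end

locale T135_hexagon_J = T135_hexagon +
  assumes J_eq: "J v = (-1, 1)"
begin

lemma Delta_product: "Delta v 2 * Delta v 4 * Delta v 6 = -1"
  using J_eq by (simp add: J_def)

lemma curl_eq_1: "curl v = 1"
proof -
  have "(Delta v 2)\<^sup>2 * (Delta v 4)\<^sup>2 * (Delta v 6)\<^sup>2 * curl v = 1"
    using J_eq by (simp add: J_def)
  then show ?thesis
    using Delta_product by (simp add: power_mult_distrib[symmetric])
qed

lemma height_pos:
  assumes "i \<in> {2,4,6}"
  shows "height i > 0"
proof -
  have "height 2 > 0"
    using curl_eq_1 by (simp add: curl_def height_def normal_def sgn_1_pos)
  moreover have "Delta v 2 \<noteq> 0" "Delta v 4 \<noteq> 0" "Delta v 6 \<noteq> 0"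
    using Delta_product by auto
  ultimately show ?thesis
    using heights_positive assms by auto
qed

lemma opposite_vertex_above: "i \<in> {2,4,6} \<Longrightarrow> tri_height i (hv v (i + 3)) > 0"
  using tri_height_opposite height_pos by simp

lemma Delta_cases:
  assumes i: "i \<in> {2,4,6}"
  shows "Delta v i = 1 \<and> tri_crossing i (hv v (i + 2)) (hv v (i + 3)) = 1
    \<or> Delta v i = -1 \<and> tri_crossing i (hv v (i + 3)) (hv v (i + 4)) = -1"
proof -
  have bounds: "0 \<le> tri_crossing j (hv v (j + 2)) (hv v (j + 3))"
    "tri_crossing j (hv v (j + 2)) (hv v (j + 3)) \<le> 1"
    "-1 \<le> tri_crossing j (hv v (j + 3)) (hv v (j + 4))"
    "tri_crossing j (hv v (j + 3)) (hv v (j + 4)) \<le> 0" if "j \<in> {2,4,6}" for j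
    using edge_crossing_entering[OF opposite_vertex_above[OF that]]
      edge_crossing_leaving[OF opposite_vertex_above[OF that]] by auto
  have "\<bar>Delta v j\<bar> \<le> 1" if "j \<in> {2,4,6}" for j
    using Delta_eq_edge_crossings[OF that] bounds[OF that] by (simp add: abs_le_iff)
  then have "\<bar>Delta v i\<bar> = 1"
    using abs_factors_eq_1[OF _ _ _ Delta_product] i by auto
  then show ?thesis
    using bounds[OF i] Delta_eq_edge_crossings[OF i] by (auto simp: abs_if split: if_splits)
qed

(* T_i and T_j share the vertex v_(i+1), and each of them would pierce the other. *)
lemma no_entering_then_leaving:
  assumes ij: "(i, j) \<in> {(2, 4), (4, 6), (6, 2)}"
    and up: "tri_crossing i (hv v (i + 2)) (hv v (i + 3)) = 1"
    and down: "tri_crossing j (hv v (j + 3)) (hv v (j + 4)) = -1"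
  shows False
proof -
  have i: "i \<in> {2,4,6}" and j: "j \<in> {2,4,6}"
    using ij by auto
  note next_j = hv_next[OF ij, of v]
  obtain x where x: "x \<in> closed_segment (hv v (i + 2)) (hv v (i + 3))"
      "x \<in> open_triangle (hv v (i - 1)) (hv v i) (hv v (i + 1))"
    and below: "tri_height i (hv v (i + 2)) < 0"
    using edge_crossing_entering(3)[OF opposite_vertex_above[OF i] up] by blast
  obtain y where y: "y \<in> closed_segment (hv v (i - 1)) (hv v i)"
      "y \<in> open_triangle (hv v (i + 1)) (hv v (i + 2)) (hv v (i + 3))"
    using edge_crossing_leaving(3)[OF opposite_vertex_above[OF j] down] next_j by auto
  show False
  proof (rule shared_vertex_no_mutual_piercing)
    show "cross3 (hv v (i - 1) - hv v (i + 1)) (hv v i - hv v (i + 1)) \<noteq> 0"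
      by (subst cross3_cyclic) (rule triangle_nondegenerate[OF i])
    show "x \<in> open_triangle (hv v (i + 1)) (hv v (i - 1)) (hv v i)"
      using x(2) open_triangle_rotate by metis
    let ?M = "cross3 (hv v i - hv v (i - 1)) (hv v (i + 1) - hv v i)"
    show "?M \<bullet> (hv v (i - 1) - hv v (i + 1)) = 0" "?M \<bullet> (hv v i - hv v (i + 1)) = 0"
      "?M \<bullet> (hv v (i + 2) - hv v (i + 1)) \<noteq> 0 \<or> ?M \<bullet> (hv v (i + 3) - hv v (i + 1)) \<noteq> 0"
      using below by (simp_all add: signed_height_diff)
    let ?M' = "cross3 (hv v j - hv v (j - 1)) (hv v (j + 1) - hv v j)"
    show "?M' \<bullet> (hv v (i + 2) - hv v (i + 1)) = 0" "?M' \<bullet> (hv v (i + 3) - hv v (i + 1)) = 0"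
      "?M' \<bullet> (hv v (i - 1) - hv v (i + 1)) \<noteq> 0 \<or> ?M' \<bullet> (hv v i - hv v (i + 1)) \<noteq> 0"
      using opposite_vertex_above[OF j] next_j by (simp_all add: signed_height_diff)
  qed (use x(1) y in auto)
qed

lemma leaving_edge_crossing_eq_minus_1:
  assumes "i \<in> {2,4,6}"
  shows "tri_crossing i (hv v (i + 3)) (hv v (i + 4)) = -1"
  using Delta_cases[of 2] Delta_cases[of 4] Delta_cases[of 6] Delta_product assms
    no_entering_then_leaving[of 2 4] no_entering_then_leaving[of 4 6] no_entering_then_leaving[of 6 2]
  by auto

lemma apexes_below:
  assumes ij: "(i, j) \<in> {(2, 4), (4, 6), (6, 2)}"
  shows "tri_height j (hv v i) < 0" "tri_height i (hv v j) < 0"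
proof -
  have i: "i \<in> {2,4,6}" and j: "j \<in> {2,4,6}"
    using ij by auto
  note next_j = hv_next[OF ij, of v]
  obtain x where x: "x \<in> closed_segment (hv v (i - 1)) (hv v i)"
      "x \<in> open_triangle (hv v (i + 1)) (hv v j) (hv v (i + 3))"
    and "tri_height j (hv v i) < 0"
    using edge_crossing_leaving(3)[OF opposite_vertex_above[OF j] leaving_edge_crossing_eq_minus_1[OF j]] next_j by auto
  then show "tri_height j (hv v i) < 0" by simp
  let ?M = "cross3 (hv v i - hv v (i - 1)) (hv v (i + 1) - hv v i)"
  have "?M \<bullet> (hv v j - hv v (i + 1)) < 0"
    by (rule plane_through_vertex_separates[OF x(2) x(1)])
      (use opposite_vertex_above[OF i] in \<open>simp_all add: signed_height_diff\<close>)
  then show "tri_height i (hv v j) < 0"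
    by (simp add: signed_height_diff)
qed

lemma sin_theta_pos:
  assumes k: "k \<in> {1,2,3}"
  shows "sin (aa_theta v k) > 0"
proof -
  have i: "2 * k \<in> {2,4,6}"
    using k by auto
  have "normal \<bullet> (hv v (2 * k) - hv v (2 * k - 1)) = norm normal * radius k * sin (aa_theta v k)"
    using apex_height[OF _ theta_char(3)[OF k, unfolded normal_rotate[OF i, symmetric]]]
      normal_rotate[OF i] normal_nonzero by simp
  moreover have "normal \<bullet> (hv v (2 * k) - hv v (2 * k - 1)) > 0"
    using height_pos[OF i] height_from_triangle[OF i] by (simp add: height_def)
  moreover have "norm normal * radius k > 0"
    using radius_pos[OF k] normal_nonzero by simp
  ultimately show ?thesis
    by (simp add: zero_less_mult_iff)
qed

lemma sin_theta_add_pos: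
  assumes lk: "(l, k) \<in> {(1, 2), (2, 3), (3, 1)}"
  shows "sin (aa_theta v k + aa_theta v l) > 0"
proof -
  have ij: "(2 * l, 2 * k) \<in> {(2, 4), (4, 6), (6, 2)}" and k: "k \<in> {1,2,3}" and l: "l \<in> {1,2,3}"
    using lk by auto
  note next_k = hv_next[OF ij, of v]
  show ?thesis
  proof (rule sin_add_pos_if_flaps_below)
    show "cross3 (hv v (2 * k + 1) - hv v (2 * k - 1)) (hv v (2 * k + 3) - hv v (2 * k - 1)) \<noteq> 0"
      using normal_rotate[of "2 * k"] normal_nonzero k by auto
    show "hv v (2 * k) = midpoint (hv v (2 * k - 1)) (hv v (2 * k + 1)) + radius k *\<^sub>R
      (cos (aa_theta v k) *\<^sub>R inward_normal (hv v (2 * k - 1)) (hv v (2 * k + 1)) (hv v (2 * k + 3))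
        + sin (aa_theta v k) *\<^sub>R sgn (cross3 (hv v (2 * k + 1) - hv v (2 * k - 1)) (hv v (2 * k + 3) - hv v (2 * k - 1))))"
      using theta_char(3)[OF k] normal_rotate[of "2 * k"] k by auto
    show "hv v (2 * l) = midpoint (hv v (2 * k + 3)) (hv v (2 * k - 1)) + radius l *\<^sub>R
      (cos (aa_theta v l) *\<^sub>R inward_normal (hv v (2 * k + 3)) (hv v (2 * k - 1)) (hv v (2 * k + 1))
        + sin (aa_theta v l) *\<^sub>R sgn (cross3 (hv v (2 * k + 1) - hv v (2 * k - 1)) (hv v (2 * k + 3) - hv v (2 * k - 1))))"
      using theta_char(3)[OF l] normal_rotate[of "2 * k"] normal_rotate[of "2 * l"] k l next_k by auto
    show "signed_height (hv v (2 * k - 1)) (hv v (2 * k)) (hv v (2 * k + 1)) (hv v (2 * l)) < 0"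
      using apexes_below(1)[OF ij] by simp
    show "signed_height (hv v (2 * k + 3)) (hv v (2 * l)) (hv v (2 * k - 1)) (hv v (2 * k)) < 0"
      using apexes_below(2)[OF ij] next_k by simp
  qed (use radius_pos[OF k] radius_pos[OF l] sin_theta_pos[OF k] sin_theta_pos[OF l] in auto)
qed

end

theorem mainTheorem9:
  fixes v :: "nat \<Rightarrow> real^3"
  assumes "equilateral_hexagon v"
    and "embedded_hexagon v"
    and "aa_defined v"
    and "J v = (-1, 1)"
  shows "(\<forall>i\<in>{1,2,3}. 0 < aa_theta v i \<and> aa_theta v i < pi) \<and>
         aa_theta v 1 + aa_theta v 2 < pi \<and>
         aa_theta v 1 + aa_theta v 3 < pi \<and>
         aa_theta v 2 + aa_theta v 3 < pi"
proof -
  interpret T135_hexagon_J v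
    using assms(1,3,4) by unfold_locales
  have range: "0 < aa_theta v k \<and> aa_theta v k < pi" if "k \<in> {1,2,3}" for k
    using angle_in_0_pi_if_sin_pos theta_char(1,2)[OF that] sin_theta_pos[OF that] by blast
  have sum: "aa_theta v k + aa_theta v l < pi" if "(l, k) \<in> {(1, 2), (2, 3), (3, 1)}" for k l
    using add_lt_pi_if_sin_add_pos range sin_theta_add_pos[OF that] that by blast
  have "aa_theta v 2 + aa_theta v 1 < pi" "aa_theta v 3 + aa_theta v 2 < pi" "aa_theta v 1 + aa_theta v 3 < pi"
    using sum by simp_all
  then show ?thesis
    using range by auto
qed

end
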